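(* Let $p$ be a prime, let $P$ be a finite $p$-group, and let $T$ be a subgroup of $P$ of index $p^c$. Then for every non-negative integer $k$, \[ |\mathrm{Sub}_{p^k}(P,T)| \leq \binom{c}{k}_p . \]
   Context: For a group $R$, a subgroup $T\le R$ and an integer $k$, $\mathrm{Sub}_k(R,T)=\{H\le R : T\le H,\ [R:H]=k\}$. For a prime $p$ and non-negative integers $m,r$, the Gaussian binomial coefficient is $\binom{m}{r}_p=\prod_{i=0}^{r-1}\frac{p^{m-i}-1}{p^{i+1}-1}$. *)

theory Defs
  imports "HOL-Algebra.Algebra"
begin

definition Sub_idx :: "('a, 'b) monoid_scheme \<Rightarrow> nat \<Rightarrow> 'a set \<Rightarrow> 'a set set" where
  "Sub_idx R k T = {H. subgroup H R \<and> T \<subseteq> H \<and> card (rcosets\<^bsub>R\<^esub> H) = k}"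

definition gauss_binom :: "nat \<Rightarrow> nat \<Rightarrow> nat \<Rightarrow> real" where
  "gauss_binom p m r = (\<Prod>i<r. (real p ^ (m - i) - 1) / (real p ^ (i + 1) - 1))"

end

theory Submission
  imports Defs
begin

text \<open>Induction on \<open>c\<close>, with \<open>P\<close> replaced by an arbitrary subgroup \<open>Q \<supseteq> T\<close>.
  If \<open>T \<noteq> Q\<close>, a maximal proper subgroup \<open>M\<close> of \<open>Q\<close> containing \<open>T\<close> has index \<open>p\<close>:
  a coset \<open>Mx \<noteq> M\<close> fixed by the conjugation action of \<open>M\<close> gives an \<open>x\<close> normalising \<open>M\<close>,
  and adjoining to \<open>M\<close> a power \<open>y = x^(p^e)\<close> with \<open>y \<notin> M\<close>, \<open>y^p \<in> M\<close> gives a subgroup of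
  order at most \<open>p |M|\<close>.

  A subgroup \<open>H \<supseteq> T\<close> of index \<open>p^k\<close> in \<open>Q\<close> either lies in \<open>M\<close>, where its index is
  \<open>p^(k-1)\<close>, or meets \<open>M\<close> in a subgroup \<open>L\<close> of index \<open>p^k\<close> in \<open>M\<close> with \<open>[H : L] = p\<close>.
  Two such \<open>H\<close> with the same \<open>L\<close> intersect exactly in \<open>L\<close>, so the sets \<open>H - L\<close>, each of
  size \<open>(p - 1) |L|\<close>, are disjoint subsets of \<open>Q - M\<close>, which has \<open>(p - 1) p^k |L|\<close>
  elements; hence at most \<open>p^k\<close> of them share \<open>L\<close>. The resulting recurrence
  \<open>|Sub_{p^k}(Q,T)| \<le> |Sub_{p^(k-1)}(M,T)| + p^k |Sub_{p^k}(M,T)|\<close> is the \<open>q\<close>-Pascal rule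
  satisfied by the Gaussian binomials.\<close>

section \<open>Gaussian binomial coefficients\<close>

lemma gauss_binom_0_right [simp]: "gauss_binom p m 0 = 1"
  by (simp add: gauss_binom_def)

lemma gauss_binom_eq_0: "m < r \<Longrightarrow> gauss_binom p m r = 0"
  unfolding gauss_binom_def by (rule prod_zero) (auto intro!: bexI[of _ m])

lemma gauss_binom_Suc_right:
  "gauss_binom p m (Suc r) = gauss_binom p m r * (real p ^ (m - r) - 1) / (real p ^ Suc r - 1)"
  by (simp add: gauss_binom_def)

lemma gauss_binom_Suc_Suc_eq_mult:
  "gauss_binom p (Suc m) (Suc r) = gauss_binom p m r * (real p ^ Suc m - 1) / (real p ^ Suc r - 1)"
proof -
  have "(\<Prod>i<Suc r. real p ^ (Suc m - i) - 1) = (real p ^ Suc m - 1) * (\<Prod>i<r. real p ^ (m - i) - 1)"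
    by (subst prod.lessThan_Suc_shift) simp
  then show ?thesis
    by (simp add: gauss_binom_def prod_dividef)
qed

lemma gauss_binom_Suc_Suc:
  assumes "1 < p"
  shows "gauss_binom p (Suc m) (Suc r) = gauss_binom p m r + real p ^ Suc r * gauss_binom p m (Suc r)"
proof (cases "r \<le> m")
  case True
  then have "real p ^ m = real p ^ r * real p ^ (m - r)"
    by (simp flip: power_add)
  moreover have "real p ^ Suc r - 1 \<noteq> 0"
    using assms one_less_power[of "real p" "Suc r"] by simp
  ultimately show ?thesis
    unfolding gauss_binom_Suc_Suc_eq_mult gauss_binom_Suc_right[of p m r] by (simp add: field_simps)
next
  case False
  then show ?thesis
    by (simp add: gauss_binom_eq_0 gauss_binom_Suc_Suc_eq_mult gauss_binom_Suc_right)
qed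

section \<open>Subgroups and cosets in finite groups\<close>

definition Sub_within :: "('a, 'b) monoid_scheme \<Rightarrow> 'a set \<Rightarrow> nat \<Rightarrow> 'a set \<Rightarrow> 'a set set" where
  "Sub_within G Q m T = {H. subgroup H G \<and> T \<subseteq> H \<and> H \<subseteq> Q \<and> card Q = m * card H}"

context group
begin

lemma card_rcosets_within:
  assumes "subgroup A G" "subgroup B G" "A \<subseteq> B"
  shows "card ((\<lambda>x. A #> x) ` B) * card A = card B"
proof -
  have "rcosets\<^bsub>G\<lparr>carrier := B\<rparr>\<^esub> A = (\<lambda>x. A #> x) ` B"
    by (auto simp: RCOSETS_def r_coset_def)
  then show ?thesis
    using group.lagrange[OF subgroup_imp_group[OF assms(2)] subgroup_incl[OF assms]]
    by (simp add: order_def)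
qed

lemma card_subgroup_dvd:
  assumes "subgroup A G" "subgroup B G" "A \<subseteq> B"
  shows "card A dvd card B"
  by (metis card_rcosets_within[OF assms] dvd_triv_right)

lemma subgroup_nat_pow_closed:
  assumes "subgroup H G" "h \<in> H"
  shows "h [^] (k::nat) \<in> H"
  using subgroup_int_pow_closed[OF assms, of "int k"] by (simp add: int_pow_int)

lemma finite_subgroupI:
  assumes "finite (carrier G)" and S: "S \<subseteq> carrier G" "\<one> \<in> S"
    and mult: "\<And>a b. a \<in> S \<Longrightarrow> b \<in> S \<Longrightarrow> a \<otimes> b \<in> S"
  shows "subgroup S G"
proof (rule subgroupI[OF S(1)])
  show "S \<noteq> {}" using S(2) by blast
  show "a \<otimes> b \<in> S" if "a \<in> S" "b \<in> S" for a b using mult that .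
  fix a assume a: "a \<in> S"
  then have a_carr: "a \<in> carrier G" using S(1) by blast
  have pow: "a [^] (k::nat) \<in> S" for k by (induction k) (use S(2) mult a in auto)
  have "0 < order G" using assms(1) order_gt_0_iff_finite by blast
  then have "a [^] (order G - 1) \<otimes> a = \<one>"
    using pow_order_eq_1[OF a_carr] nat_pow_Suc[of a "order G - 1"] by simp
  then have "inv a = a [^] (order G - 1)" using inv_equality a_carr by simp
  then show "inv a \<in> S" using pow by simp
qed

lemma conj_pow_mem:
  assumes x: "x \<in> carrier G" and M: "M \<subseteq> carrier G"
    and conj: "\<And>g. g \<in> M \<Longrightarrow> x \<otimes> g \<otimes> inv x \<in> M" and g: "g \<in> M"
  shows "x [^] (k::nat) \<otimes> g \<otimes> inv (x [^] k) \<in> M"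
proof (induction k)
  case 0
  then show ?case using g M by auto
next
  case (Suc k)
  have "x [^] Suc k \<otimes> g \<otimes> inv (x [^] Suc k) = x \<otimes> (x [^] k \<otimes> g \<otimes> inv (x [^] k)) \<otimes> inv x"
    using x g M by (auto simp only: nat_pow_Suc2[OF x]) (auto simp: inv_mult_group m_assoc)
  then show ?case using Suc conj by simp
qed

lemma subgroup_adjoin_normalizing:
  assumes fin: "finite (carrier G)" and M: "subgroup M G" and y: "y \<in> carrier G"
    and conj: "\<And>g. g \<in> M \<Longrightarrow> y \<otimes> g \<otimes> inv y \<in> M"
  shows "subgroup {g \<otimes> y [^] (i::nat) | g i. g \<in> M} G" (is "subgroup ?K G")
proof (rule finite_subgroupI[OF fin])
  have M_carr: "M \<subseteq> carrier G" using M subgroup.subset by blast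
  show "?K \<subseteq> carrier G" using M_carr y by auto
  show "\<one> \<in> ?K" using subgroup.one_closed[OF M]
    by (auto intro!: exI[of _ "\<one>"] exI[of _ "0::nat"])
  fix u v assume "u \<in> ?K" "v \<in> ?K"
  then obtain g h i j where u: "u = g \<otimes> y [^] (i::nat)" "g \<in> M"
    and v: "v = h \<otimes> y [^] (j::nat)" "h \<in> M" by blast
  have "inv (y [^] i) \<otimes> (y [^] i \<otimes> y [^] j) = y [^] j"
    using y by (simp add: m_assoc [symmetric])
  then have "u \<otimes> v = (g \<otimes> (y [^] i \<otimes> h \<otimes> inv (y [^] i))) \<otimes> (y [^] i \<otimes> y [^] j)"
    using u v M_carr y by (simp add: m_assoc subsetD)
  also have "y [^] i \<otimes> y [^] j = y [^] (i + j)"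
    using y by (simp add: nat_pow_mult)
  finally have "u \<otimes> v = (g \<otimes> (y [^] i \<otimes> h \<otimes> inv (y [^] i))) \<otimes> y [^] (i + j)" .
  moreover have "g \<otimes> (y [^] i \<otimes> h \<otimes> inv (y [^] i)) \<in> M"
    using subgroup.m_closed[OF M u(2) conj_pow_mem[OF y M_carr conj v(2)]] .
  ultimately show "u \<otimes> v \<in> ?K" by blast
qed

lemma card_adjoin_le:
  assumes fin: "finite (carrier G)" and M: "subgroup M G" and y: "y \<in> carrier G"
    and n: "0 < n" "y [^] n \<in> M"
  shows "card {g \<otimes> y [^] (i::nat) | g i. g \<in> M} \<le> n * card M"
proof -
  have M_carr: "M \<subseteq> carrier G" using M subgroup.subset by blast
  have finM: "finite (M \<times> {..<n})" using finite_subset[OF M_carr fin] by simp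
  have "{g \<otimes> y [^] (i::nat) | g i. g \<in> M} \<subseteq> (\<lambda>(g, i). g \<otimes> y [^] i) ` (M \<times> {..<n})"
  proof clarify
    fix g i assume g: "g \<in> M"
    have "y [^] i = y [^] (n * (i div n)) \<otimes> y [^] (i mod n)"
      using nat_pow_mult[OF y] by simp
    also have "y [^] (n * (i div n)) = (y [^] n) [^] (i div n)"
      using nat_pow_pow[OF y] by simp
    finally have "g \<otimes> y [^] i = (g \<otimes> (y [^] n) [^] (i div n)) \<otimes> y [^] (i mod n)"
      using g M_carr y by (auto simp: m_assoc)
    moreover have "g \<otimes> (y [^] n) [^] (i div n) \<in> M"
      using subgroup.m_closed[OF M g subgroup_nat_pow_closed[OF M n(2)]] .
    ultimately show "g \<otimes> y [^] i \<in> (\<lambda>(g, i). g \<otimes> y [^] i) ` (M \<times> {..<n})"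
      using n(1) by (force intro!: image_eqI[of _ _ "(_, i mod n)"])
  qed
  then have "card {g \<otimes> y [^] (i::nat) | g i. g \<in> M}
      \<le> card ((\<lambda>(g, i). g \<otimes> y [^] i) ` (M \<times> {..<n}))"
    using finM by (intro card_mono) auto
  also have "\<dots> \<le> card (M \<times> {..<n})"
    using finM by (rule card_image_le)
  finally show ?thesis by (simp add: card_cartesian_product mult.commute)
qed

lemma conj_rcos:
  assumes M: "subgroup M G" and g: "g \<in> M" and x: "x \<in> carrier G"
  shows "l_coset G g (M #> x) #> inv g = M #> (x \<otimes> inv g)"
proof -
  have M_carr: "M \<subseteq> carrier G" using M subgroup.subset by blast
  have g_carr: "g \<in> carrier G" using g M_carr by blast
  have "l_coset G g (M #> x) = M #> x"
    using coset_assoc[OF g_carr x M_carr] coset_join3[OF g_carr M g] by simp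
  then show ?thesis using coset_mult_assoc[OF M_carr x] g_carr by simp
qed

lemma rcos_eq_imp_conj_mem:
  assumes M: "subgroup M G" and x: "x \<in> carrier G" and g: "g \<in> carrier G"
    and "M #> (x \<otimes> g) = M #> x"
  shows "x \<otimes> g \<otimes> inv x \<in> M"
  using rcos_self[OF m_closed[OF x g] M] assms(4) subgroup.rcos_module_imp[OF M is_group x] by simp

lemma set_mult_rcos_absorb:
  assumes M: "subgroup M G" and L: "subgroup L G" "L \<subseteq> M" and h: "h \<in> carrier G"
  shows "M <#> (L #> h) = M #> h"
proof -
  have M_carr: "M \<subseteq> carrier G" using M subgroup.subset by blast
  have "M <#> L = M"
  proof
    show "M <#> L \<subseteq> M" unfolding set_mult_def using L(2) subgroup.m_closed[OF M] by blast
    show "M \<subseteq> M <#> L"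
      unfolding set_mult_def using subgroup.one_closed[OF L(1)] M_carr by force
  qed
  then show ?thesis using setmult_rcos_assoc[OF M_carr subgroup.subset[OF L(1)] h] by simp
qed

lemma card_le_index_mult_card_inter:
  assumes fin: "finite (carrier G)" and H: "subgroup H G" and M: "subgroup M G" and Q: "subgroup Q G"
    and "H \<subseteq> Q" "M \<subseteq> Q"
  shows "card H \<le> card ((\<lambda>x. M #> x) ` Q) * card (H \<inter> M)"
proof -
  define L where "L = H \<inter> M"
  have L: "subgroup L G" "L \<subseteq> H" "L \<subseteq> M"
    unfolding L_def using subgroups_Inter_pair[OF H M] by auto
  have H_carr: "H \<subseteq> carrier G" using H subgroup.subset by blast
  have inj: "inj_on (\<lambda>C. M <#> C) ((\<lambda>x. L #> x) ` H)"
  proof (rule inj_onI, clarify)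
    fix h1 h2 assume h: "h1 \<in> H" "h2 \<in> H" and eq: "M <#> (L #> h1) = M <#> (L #> h2)"
    have h_carr: "h1 \<in> carrier G" "h2 \<in> carrier G" using h H_carr by auto
    have "M #> h1 = M #> h2"
      using eq set_mult_rcos_absorb[OF M L(1,3)] h_carr by simp
    then have "h1 \<otimes> inv h2 \<in> M"
      using rcos_self[OF h_carr(1) M] subgroup.rcos_module_imp[OF M is_group h_carr(2)] by simp
    moreover have "h1 \<otimes> inv h2 \<in> H"
      using subgroup.m_closed[OF H h(1) subgroup.m_inv_closed[OF H h(2)]] .
    ultimately have "h1 \<in> L #> h2"
      using subgroup.rcos_module_rev[OF L(1) is_group h_carr(2,1)] unfolding L_def by blast
    then show "L #> h1 = L #> h2"
      using repr_independence[OF _ h_carr(2) L(1)] by simp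
  qed
  have "(\<lambda>C. M <#> C) ` (\<lambda>x. L #> x) ` H \<subseteq> (\<lambda>x. M #> x) ` Q"
    using set_mult_rcos_absorb[OF M L(1,3)] H_carr assms(5) by force
  moreover have "finite ((\<lambda>x. M #> x) ` Q)"
    using finite_subset[OF subgroup.subset[OF Q] fin] by simp
  ultimately have "card ((\<lambda>x. L #> x) ` H) \<le> card ((\<lambda>x. M #> x) ` Q)"
    using card_image[OF inj] card_mono by metis
  then show ?thesis
    using card_rcosets_within[OF L(1) H L(2)] unfolding L_def by (metis mult_le_mono1)
qed

lemma Sub_within_inside:
  assumes "card Q = n * card M" "0 < n"
  shows "{H \<in> Sub_within G Q (n * m) T. H \<subseteq> M} \<subseteq> Sub_within G M m T"
  using assms unfolding Sub_within_def by (auto simp: mult.assoc)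

lemma finite_Sub_within:
  assumes "finite (carrier G)"
  shows "finite (Sub_within G Q m T)"
proof -
  have "Sub_within G Q m T \<subseteq> Pow (carrier G)"
    unfolding Sub_within_def using subgroup.subset by blast
  then show ?thesis using assms finite_subset by blast
qed

lemma card_Sub_within_1_le:
  assumes "finite (carrier G)" "subgroup Q G"
  shows "card (Sub_within G Q 1 T) \<le> 1"
proof -
  have "Sub_within G Q 1 T \<subseteq> {Q}"
  proof
    fix H assume "H \<in> Sub_within G Q 1 T"
    then have "H \<subseteq> Q" "card H = card Q" by (auto simp: Sub_within_def)
    then show "H \<in> {Q}"
      using card_subset_eq[OF finite_subset[OF subgroup.subset[OF assms(2)] assms(1)]] by blast
  qed
  then show ?thesis using card_mono[of "{Q}"] by simp
qed

lemma Sub_within_eq_empty: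
  assumes "finite (carrier G)" "card Q < m * card T"
  shows "Sub_within G Q m T = {}"
proof -
  have "m * card T \<le> card Q" if "H \<in> Sub_within G Q m T" for H
  proof -
    have H: "subgroup H G" "T \<subseteq> H" "card Q = m * card H"
      using that by (auto simp: Sub_within_def)
    then have "card T \<le> card H"
      using card_mono[OF finite_subset[OF subgroup.subset[OF H(1)] assms(1)]] by blast
    then show ?thesis using H(3) by simp
  qed
  then show ?thesis using assms(2) by fastforce
qed

lemma Sub_idx_eq_Sub_within:
  assumes "finite (carrier G)"
  shows "Sub_idx G m T = Sub_within G (carrier G) m T"
proof -
  have "card (rcosets H) = m \<longleftrightarrow> card (carrier G) = m * card H" if "subgroup H G" for H
  proof -
    have lagrange_H: "card (rcosets H) * card H = card (carrier G)"
      using lagrange[OF that] by (simp add: order_def)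
    show ?thesis
      using subgroup.finite_imp_card_positive[OF that assms] by (simp flip: lagrange_H)
  qed
  then show ?thesis
    unfolding Sub_idx_def Sub_within_def using subgroup.subset by blast
qed

end

section \<open>Finite p-groups\<close>

lemma (in group_action) prime_dvd_card_orbit:
  assumes "Factorial_Ring.prime p" "order G = p ^ n" and a: "a \<in> E"
    and g: "g \<in> carrier G" "\<phi> g a \<noteq> a"
  shows "p dvd card (orbit G \<phi> a)"
proof -
  have "card (orbit G \<phi> a) dvd p ^ n"
    using orbit_stabilizer_theorem[OF a] assms(2) by (metis dvd_triv_left)
  then obtain i where i: "card (orbit G \<phi> a) = p ^ i"
    using divides_primepow_nat[OF assms(1)] by blast
  then have "finite (orbit G \<phi> a)"
    using assms(1) by (metis card_ge_0_finite not_prime_0 zero_less_power gr0I)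
  then have "card {a, \<phi> g a} \<le> card (orbit G \<phi> a)"
    using orbit_refl[OF a] g(1) by (intro card_mono) (auto simp: orbit_def)
  then have "i \<noteq> 0" using i g(2) by (cases i) auto
  then show ?thesis using i by simp
qed

lemma (in group_action) prime_dvd_card_fixed_points:
  assumes "Factorial_Ring.prime p" "order G = p ^ n" and A: "A \<subseteq> E" "finite A"
    and A_invariant: "\<And>g a. g \<in> carrier G \<Longrightarrow> a \<in> A \<Longrightarrow> \<phi> g a \<in> A"
    and "p dvd card A"
  shows "p dvd card {a \<in> A. \<forall>g \<in> carrier G. \<phi> g a = a}"
proof -
  define F where "F = {a \<in> A. \<forall>g \<in> carrier G. \<phi> g a = a}"
  define R where "R = A - F"
  have orbit_in_R: "orbit G \<phi> a \<subseteq> R" if a: "a \<in> R" for a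
  proof
    fix b assume b: "b \<in> orbit G \<phi> a"
    have "a \<in> A" "b \<in> A" using a b A_invariant unfolding R_def orbit_def by auto
    then have "a \<in> orbit G \<phi> b" using orbit_sym b A(1) by blast
    then obtain g where g: "g \<in> carrier G" "a = \<phi> g b" unfolding orbit_def by blast
    have "b \<notin> F"
    proof
      assume "b \<in> F"
      then have "a = b" using g unfolding F_def by simp
      then show False using a \<open>b \<in> F\<close> unfolding R_def by simp
    qed
    then show "b \<in> R" using \<open>b \<in> A\<close> R_def by blast
  qed
  have finite_R: "finite R" using A(2) R_def by simp
  have "p dvd card (orbit G \<phi> a)" if a: "a \<in> R" for a
  proof -
    obtain g where "g \<in> carrier G" "\<phi> g a \<noteq> a" using a unfolding R_def F_def by blast
    then show ?thesis using prime_dvd_card_orbit[OF assms(1,2)] a A(1) R_def by blast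
  qed
  then have "p dvd (\<Sum>B \<in> (\<lambda>a. orbit G \<phi> a) ` R. card B)"
    by (auto intro: dvd_sum)
  moreover have "card (\<Union> ((\<lambda>a. orbit G \<phi> a) ` R)) = (\<Sum>B \<in> (\<lambda>a. orbit G \<phi> a) ` R. card B)"
  proof (rule card_Union_disjoint)
    show "pairwise disjnt ((\<lambda>a. orbit G \<phi> a) ` R)"
      using disjoint_union A(1) unfolding pairwise_def disjnt_def orbits_def R_def by blast
  qed (use orbit_in_R finite_R finite_subset in blast)
  moreover have "\<Union> ((\<lambda>a. orbit G \<phi> a) ` R) = R"
    using orbit_in_R orbit_refl A(1) R_def by blast
  ultimately have "p dvd card R" by simp
  moreover have "F \<subseteq> A" unfolding F_def by blast
  then have "card A = card F + card R"
    using card_Diff_subset[OF finite_subset[OF _ A(2)]] card_mono[OF A(2)] unfolding R_def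
    by (metis le_add_diff_inverse)
  ultimately show ?thesis
    using \<open>p dvd card A\<close> F_def by (metis dvd_add_left_iff)
qed

locale p_group = group G for G (structure) + fixes p :: nat
  assumes prime_p: "Factorial_Ring.prime p"
    and finite_carrier: "finite (carrier G)"
    and order_prime_power: "\<exists>n. order G = p ^ n"
begin

lemma prime_gt_1: "1 < p"
  using prime_p prime_gt_1_nat by blast

lemma finite_subgroup: "subgroup A G \<Longrightarrow> finite A"
  using finite_carrier subgroup.subset finite_subset by blast

lemma card_subgroup_prime_power:
  assumes "subgroup A G"
  shows "\<exists>i. card A = p ^ i"
proof -
  obtain n where "order G = p ^ n" using order_prime_power by blast
  then have "card A dvd p ^ n"
    using card_subgroup_dvd[OF assms subgroup_self subgroup.subset[OF assms]] by (simp add: order_def)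
  then show ?thesis using divides_primepow_nat[OF prime_p] by blast
qed

lemma card_subgroup_ratio:
  assumes A: "subgroup A G" and B: "subgroup B G" and "A \<subseteq> B"
  shows "\<exists>a. card B = p ^ a * card A \<and> (a = 0 \<longleftrightarrow> A = B)"
proof -
  obtain i j where i: "card A = p ^ i" and j: "card B = p ^ j"
    using card_subgroup_prime_power A B by meson
  have "p ^ i dvd p ^ j" using card_subgroup_dvd[OF assms] i j by simp
  then have "i \<le> j" using prime_gt_1 by (simp add: dvd_power_iff_le)
  then have "p ^ j = p ^ (j - i) * p ^ i" by (simp flip: power_add)
  then have ratio: "card B = p ^ (j - i) * card A" by (simp only: i j)
  moreover have "j - i = 0 \<longleftrightarrow> A = B"
  proof -
    have "card B = card A \<longleftrightarrow> p ^ (j - i) = 1"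
      using ratio subgroup.finite_imp_card_positive[OF A finite_carrier] by simp
    also have "\<dots> \<longleftrightarrow> j - i = 0"
      using prime_gt_1 by simp
    finally show ?thesis
      using card_subset_eq[OF finite_subgroup[OF B] \<open>A \<subseteq> B\<close>] by auto
  qed
  ultimately show ?thesis by (intro exI[of _ "j - i"] conjI)
qed

lemma card_eq_prime_mult_if_le:
  assumes "subgroup A G" "subgroup B G" "A \<subseteq> B" "A \<noteq> B" "card B \<le> p * card A"
  shows "card B = p * card A"
proof -
  obtain a where a: "card B = p ^ a * card A" "a \<noteq> 0"
    using card_subgroup_ratio[OF assms(1-3)] assms(4) by blast
  have "p ^ a \<le> p"
    using a(1) assms(5) subgroup.finite_imp_card_positive[OF assms(1) finite_carrier] by simp
  then have "a \<le> 1"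
    using power_le_imp_le_exp[OF prime_gt_1, of a 1] by simp
  then have "a = 1" using a(2) by simp
  then show ?thesis using a(1) by simp
qed

lemma subgroup_between_index_prime:
  assumes "subgroup L G" "subgroup I G" "subgroup H G" "L \<subseteq> I" "I \<subseteq> H"
    and "card H = p * card L"
  shows "I = L \<or> I = H"
proof -
  obtain a b where a: "card I = p ^ a * card L" "a = 0 \<longleftrightarrow> L = I"
    and b: "card H = p ^ b * card I" "b = 0 \<longleftrightarrow> I = H"
    using card_subgroup_ratio assms(1-5) by meson
  have "p ^ 1 * card L = p ^ (a + b) * card L"
    using a(1) b(1) assms(6) by (simp add: power_add ac_simps)
  then have "p ^ 1 = p ^ (a + b)"
    using subgroup.finite_imp_card_positive[OF assms(1) finite_carrier] by simp
  then have "a + b = 1"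
    using power_inject_exp[OF prime_gt_1, of 1 "a + b"] by simp
  then show ?thesis using a(2) b(2) by auto
qed

lemma exists_pow_step_into_subgroup:
  assumes "subgroup M G" "x \<in> carrier G" "x \<notin> M"
  shows "\<exists>e. x [^] (p ^ e) \<notin> M \<and> (x [^] (p ^ e)) [^] p \<in> M"
proof -
  obtain n where "order G = p ^ n" using order_prime_power by blast
  then have "x [^] (p ^ n) \<in> M"
    using pow_order_eq_1[OF assms(2)] subgroup.one_closed[OF assms(1)] by simp
  moreover have "x [^] (p ^ 0) \<notin> M" using assms(2,3) by simp
  ultimately obtain e where "x [^] (p ^ e) \<notin> M" "x [^] (p ^ Suc e) \<in> M"
    using ex_least_nat_less[of "\<lambda>e. x [^] (p ^ e) \<in> M" n] by blast
  moreover have "(x [^] (p ^ e)) [^] p = x [^] (p ^ Suc e)"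
    using nat_pow_pow[OF assms(2)] by (simp add: mult.commute)
  ultimately show ?thesis by auto
qed

lemma prime_dvd_card_rcosets:
  assumes M: "subgroup M G" and Q: "subgroup Q G" and "M \<subseteq> Q" "M \<noteq> Q"
  shows "p dvd card ((\<lambda>x. M #> x) ` Q)"
proof -
  obtain a where a: "card Q = p ^ a * card M" "a \<noteq> 0"
    using card_subgroup_ratio[OF M Q \<open>M \<subseteq> Q\<close>] \<open>M \<noteq> Q\<close> by blast
  then have "card ((\<lambda>x. M #> x) ` Q) * card M = p ^ a * card M"
    using card_rcosets_within[OF M Q \<open>M \<subseteq> Q\<close>] by simp
  then show ?thesis
    using a(2) subgroup.finite_imp_card_positive[OF M finite_carrier] by simp
qed

text \<open>\<open>M\<close> acts on the right cosets of \<open>M\<close> in \<open>Q\<close> by \<open>g \<cdot> Mx = g Mx g\<inverse> = Mx g\<inverse>\<close>.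
  Their number is divisible by \<open>p\<close>, hence so is the number of fixed cosets, one of which
  is \<open>M\<close> itself.\<close>

lemma exists_fixed_rcos:
  assumes M: "subgroup M G" and Q: "subgroup Q G" and "M \<subseteq> Q" "M \<noteq> Q"
  shows "\<exists>x \<in> Q. x \<notin> M \<and> (\<forall>g \<in> M. M #> (x \<otimes> inv g) = M #> x)"
proof -
  have M_carr: "M \<subseteq> carrier G" and Q_carr: "Q \<subseteq> carrier G"
    using M Q subgroup.subset by blast+
  define \<phi> where "\<phi> = (\<lambda>g. \<lambda>H \<in> {H. H \<subseteq> carrier G}. l_coset G g H #> inv g)"
  define A where "A = (\<lambda>x. M #> x) ` Q"
  define F where "F = {C \<in> A. \<forall>g \<in> M. \<phi> g C = C}"
  interpret M_act: group_action "G\<lparr>carrier := M\<rparr>" "{H. H \<subseteq> carrier G}" \<phi>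
    unfolding \<phi>_def by (rule group_action.induced_action[OF action_by_conjugation_on_power_set M])
  have \<phi>_rcos: "\<phi> g (M #> x) = M #> (x \<otimes> inv g)" if "g \<in> M" "x \<in> carrier G" for g x
    using conj_rcos[OF M that] r_coset_subset_G[OF M_carr that(2)] unfolding \<phi>_def by simp
  obtain j where "order (G\<lparr>carrier := M\<rparr>) = p ^ j"
    using card_subgroup_prime_power[OF M] by (auto simp: order_def)
  moreover have "A \<subseteq> {H. H \<subseteq> carrier G}" "finite A"
    using r_coset_subset_G M_carr Q_carr finite_subgroup[OF Q] unfolding A_def by auto
  moreover have "\<phi> g C \<in> A" if "g \<in> M" "C \<in> A" for g C
  proof -
    obtain x where "x \<in> Q" "C = M #> x" using \<open>C \<in> A\<close> A_def by blast
    moreover have "x \<otimes> inv g \<in> Q"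
      using \<open>x \<in> Q\<close> \<open>g \<in> M\<close> \<open>M \<subseteq> Q\<close> subgroup.m_closed[OF Q] subgroup.m_inv_closed[OF Q] by blast
    ultimately show ?thesis using \<phi>_rcos \<open>g \<in> M\<close> Q_carr A_def by auto
  qed
  ultimately have "p dvd card F"
    using M_act.prime_dvd_card_fixed_points[OF prime_p] prime_dvd_card_rcosets[OF assms]
    unfolding F_def A_def by auto
  moreover have "M \<in> F"
  proof -
    have "\<phi> g M = M" if "g \<in> M" for g
      using \<phi>_rcos[OF that one_closed] subgroup.rcos_const[OF M is_group subgroup.m_inv_closed[OF M that]]
        that M_carr by (auto simp: subsetD)
    moreover have "M \<in> A"
      using coset_mult_one[OF M_carr] subgroup.one_closed[OF Q] unfolding A_def by force
    ultimately show ?thesis unfolding F_def by blast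
  qed
  ultimately have "F \<noteq> {M}" using prime_gt_1 by auto
  then obtain x where x: "x \<in> Q" "M #> x \<in> F" "M #> x \<noteq> M"
    using \<open>M \<in> F\<close> unfolding F_def A_def by blast
  have x_carr: "x \<in> carrier G" using x(1) Q_carr by blast
  then have "x \<notin> M" using coset_join2[OF _ M] x(3) by blast
  moreover have "M #> (x \<otimes> inv g) = M #> x" if "g \<in> M" for g
    using x(2) \<phi>_rcos[OF that x_carr] that unfolding F_def by simp
  ultimately show ?thesis using x(1) by blast
qed

lemma exists_normalizing_element:
  assumes M: "subgroup M G" and Q: "subgroup Q G" and "M \<subseteq> Q" "M \<noteq> Q"
  shows "\<exists>x \<in> Q. x \<notin> M \<and> (\<forall>g \<in> M. x \<otimes> g \<otimes> inv x \<in> M)"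
proof -
  obtain x where x: "x \<in> Q" "x \<notin> M" and fixed: "\<forall>g \<in> M. M #> (x \<otimes> inv g) = M #> x"
    using exists_fixed_rcos[OF assms] by blast
  have x_carr: "x \<in> carrier G" using x(1) Q subgroup.subset by blast
  have "x \<otimes> g \<otimes> inv x \<in> M" if "g \<in> M" for g
  proof (rule rcos_eq_imp_conj_mem[OF M x_carr])
    show "g \<in> carrier G" using that M subgroup.subset by blast
    then show "M #> (x \<otimes> g) = M #> x"
      using fixed subgroup.m_inv_closed[OF M that] by auto
  qed
  then show ?thesis using x by blast
qed

lemma exists_larger_subgroup_index_le:
  assumes M: "subgroup M G" and Q: "subgroup Q G" and "M \<subseteq> Q" "M \<noteq> Q"
  shows "\<exists>K. subgroup K G \<and> M \<subset> K \<and> K \<subseteq> Q \<and> card K \<le> p * card M"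
proof -
  have M_carr: "M \<subseteq> carrier G" using M subgroup.subset by blast
  obtain x where x: "x \<in> Q" "x \<notin> M" "\<forall>g \<in> M. x \<otimes> g \<otimes> inv x \<in> M"
    using exists_normalizing_element[OF assms] by blast
  have x_carr: "x \<in> carrier G" using x(1) Q subgroup.subset by blast
  obtain e where e: "x [^] (p ^ e) \<notin> M" "(x [^] (p ^ e)) [^] p \<in> M"
    using exists_pow_step_into_subgroup[OF M x_carr x(2)] by blast
  define y where "y = x [^] (p ^ e)"
  have y: "y \<in> Q" "y \<in> carrier G" "y \<notin> M" "y [^] p \<in> M"
    using e subgroup_nat_pow_closed[OF Q x(1)] x_carr unfolding y_def by auto
  have y_conj: "y \<otimes> g \<otimes> inv y \<in> M" if "g \<in> M" for g
    using conj_pow_mem[OF x_carr M_carr _ that] x(3) unfolding y_def by blast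
  define K where "K = {g \<otimes> y [^] (i::nat) | g i. g \<in> M}"
  have "subgroup K G"
    unfolding K_def by (rule subgroup_adjoin_normalizing[OF finite_carrier M y(2) y_conj])
  moreover have "M \<subset> K"
  proof -
    have "g = g \<otimes> y [^] (0::nat)" if "g \<in> M" for g using that M_carr by auto
    moreover have "y = \<one> \<otimes> y [^] (1::nat)" using y(2) by simp
    ultimately show ?thesis
      using subgroup.one_closed[OF M] y(3) unfolding K_def by blast
  qed
  moreover have "K \<subseteq> Q"
    using \<open>M \<subseteq> Q\<close> subgroup.m_closed[OF Q] subgroup_nat_pow_closed[OF Q y(1)]
    unfolding K_def by blast
  moreover have "card K \<le> p * card M"
    using card_adjoin_le[OF finite_carrier M y(2) _ y(4)] prime_gt_1 unfolding K_def by simp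
  ultimately show ?thesis by blast
qed

lemma exists_index_prime_subgroup:
  assumes T: "subgroup T G" and Q: "subgroup Q G" and "T \<subseteq> Q" "T \<noteq> Q"
  shows "\<exists>M. subgroup M G \<and> T \<subseteq> M \<and> M \<subseteq> Q \<and> card Q = p * card M"
proof -
  define C where "C = {K. subgroup K G \<and> T \<subseteq> K \<and> K \<subseteq> Q \<and> K \<noteq> Q}"
  have "C \<subseteq> Pow (carrier G)" unfolding C_def using subgroup.subset by blast
  then have "finite C" using finite_carrier finite_subset by blast
  moreover have "T \<in> C" unfolding C_def using T assms(3,4) by blast
  ultimately obtain M where "M \<in> C" and M_max: "\<And>K. K \<in> C \<Longrightarrow> M \<subseteq> K \<Longrightarrow> M = K"
    and "T \<subseteq> M"
    using finite_has_maximal2 by metis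
  then have M: "subgroup M G" "M \<subseteq> Q" "M \<noteq> Q" unfolding C_def by blast+
  obtain K where K: "subgroup K G" "M \<subset> K" "K \<subseteq> Q" "card K \<le> p * card M"
    using exists_larger_subgroup_index_le[OF M(1) Q M(2,3)] by blast
  then have "K = Q" using M_max[of K] \<open>T \<subseteq> M\<close> unfolding C_def by blast
  then show ?thesis
    using card_eq_prime_mult_if_le[OF M(1) Q M(2,3)] K(4) M(1,2) \<open>T \<subseteq> M\<close> by blast
qed

lemma card_inter_index_prime:
  assumes H: "subgroup H G" and M: "subgroup M G" and Q: "subgroup Q G"
    and "H \<subseteq> Q" "M \<subseteq> Q" "card Q = p * card M" "\<not> H \<subseteq> M"
  shows "card H = p * card (H \<inter> M)"
proof -
  have "card ((\<lambda>x. M #> x) ` Q) = p"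
    using card_rcosets_within[OF M Q \<open>M \<subseteq> Q\<close>] \<open>card Q = p * card M\<close>
      subgroup.finite_imp_card_positive[OF M finite_carrier] by simp
  then have "card H \<le> p * card (H \<inter> M)"
    using card_le_index_mult_card_inter[OF finite_carrier H M Q \<open>H \<subseteq> Q\<close> \<open>M \<subseteq> Q\<close>] by simp
  then show ?thesis
    using card_eq_prime_mult_if_le[OF subgroups_Inter_pair[OF H M] H] \<open>\<not> H \<subseteq> M\<close> by blast
qed

lemma card_subgroups_meeting_in_le:
  assumes M: "subgroup M G" and Q: "subgroup Q G" and "M \<subseteq> Q" "card Q = p * card M"
    and L: "subgroup L G" "L \<subseteq> M" "card M = m * card L"
  shows "card {H. subgroup H G \<and> H \<subseteq> Q \<and> \<not> H \<subseteq> M \<and> H \<inter> M = L} \<le> m"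
proof -
  define F where "F = {H. subgroup H G \<and> H \<subseteq> Q \<and> \<not> H \<subseteq> M \<and> H \<inter> M = L}"
  have L_pos: "0 < card L" using subgroup.finite_imp_card_positive[OF L(1) finite_carrier] .
  have card_H: "card H = p * card L" if "H \<in> F" for H
    using card_inter_index_prime[OF _ M Q _ \<open>M \<subseteq> Q\<close> \<open>card Q = p * card M\<close>] that
    unfolding F_def by auto
  have card_diff: "card (H - L) = (p - 1) * card L" if "H \<in> F" for H
  proof -
    have "L \<subseteq> H" "finite H" using that finite_subgroup unfolding F_def by auto
    then show ?thesis using card_Diff_subset card_H[OF that] finite_subset
      by (metis diff_mult_distrib mult_1)
  qed
  have disjoint: "(H1 - L) \<inter> (H2 - L) = {}" if "H1 \<in> F" "H2 \<in> F" "H1 \<noteq> H2" for H1 H2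
  proof -
    have H: "subgroup H1 G" "subgroup H2 G" "L \<subseteq> H1 \<inter> H2"
      using that unfolding F_def by auto
    have "H1 \<inter> H2 = L \<or> H1 \<inter> H2 = H1" "H1 \<inter> H2 = L \<or> H1 \<inter> H2 = H2"
      using subgroup_between_index_prime[OF L(1) subgroups_Inter_pair[OF H(1,2)]] H card_H that
      by auto
    then have "H1 \<inter> H2 = L" using \<open>H1 \<noteq> H2\<close> by blast
    then show ?thesis by blast
  qed
  have finite_F: "finite F"
    using finite_subset[of F "Pow (carrier G)"] finite_carrier subgroup.subset unfolding F_def by blast
  have "card F * ((p - 1) * card L) = (\<Sum>H \<in> F. card (H - L))"
    using card_diff by simp
  also have "\<dots> = card (\<Union>H \<in> F. H - L)"
    using finite_F disjoint finite_subgroup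
    by (intro card_UN_disjoint[symmetric]) (auto simp: F_def)
  also have "\<dots> \<le> card (Q - M)"
    using finite_subgroup[OF Q] unfolding F_def by (intro card_mono) auto
  also have "\<dots> = m * ((p - 1) * card L)"
    using card_Diff_subset[OF finite_subset[OF \<open>M \<subseteq> Q\<close> finite_subgroup[OF Q]] \<open>M \<subseteq> Q\<close>]
      \<open>card Q = p * card M\<close> \<open>card M = m * card L\<close>
    by (simp add: diff_mult_distrib diff_mult_distrib2 mult.left_commute)
  finally show ?thesis
    using L_pos prime_gt_1 unfolding F_def by simp
qed

lemma inter_mem_Sub_within:
  assumes M: "subgroup M G" and Q: "subgroup Q G" and "T \<subseteq> M" "M \<subseteq> Q" "card Q = p * card M"
    and H: "H \<in> Sub_within G Q m T" "\<not> H \<subseteq> M"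
  shows "H \<inter> M \<in> Sub_within G M m T"
proof -
  have H': "subgroup H G" "T \<subseteq> H" "H \<subseteq> Q" "card Q = m * card H"
    using H(1) unfolding Sub_within_def by auto
  then have "p * card M = p * (m * card (H \<inter> M))"
    using card_inter_index_prime[OF H'(1) M Q H'(3) \<open>M \<subseteq> Q\<close> \<open>card Q = p * card M\<close> H(2)]
      \<open>card Q = p * card M\<close> by (simp add: ac_simps)
  then show ?thesis
    using subgroups_Inter_pair[OF H'(1) M] H'(2) \<open>T \<subseteq> M\<close> prime_gt_1
    unfolding Sub_within_def by auto
qed

lemma card_Sub_within_Suc_le:
  assumes T: "subgroup T G" and M: "subgroup M G" and Q: "subgroup Q G"
    and "T \<subseteq> M" "M \<subseteq> Q" "card Q = p * card M"
  shows "card (Sub_within G Q (p ^ Suc k) T)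
    \<le> card (Sub_within G M (p ^ k) T) + p ^ Suc k * card (Sub_within G M (p ^ Suc k) T)"
proof -
  define S where "S = Sub_within G Q (p ^ Suc k) T"
  define fiber where "fiber L = {H. subgroup H G \<and> H \<subseteq> Q \<and> \<not> H \<subseteq> M \<and> H \<inter> M = L}" for L
  have "{H \<in> S. H \<subseteq> M} \<subseteq> Sub_within G M (p ^ k) T"
    using Sub_within_inside[OF \<open>card Q = p * card M\<close>] prime_gt_1 unfolding S_def by simp
  then have inside: "card {H \<in> S. H \<subseteq> M} \<le> card (Sub_within G M (p ^ k) T)"
    using card_mono[OF finite_Sub_within[OF finite_carrier]] by blast
  have "{H \<in> S. \<not> H \<subseteq> M} \<subseteq> (\<Union>L \<in> Sub_within G M (p ^ Suc k) T. fiber L)"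
    using inter_mem_Sub_within[OF M Q \<open>T \<subseteq> M\<close> \<open>M \<subseteq> Q\<close> \<open>card Q = p * card M\<close>]
    unfolding S_def fiber_def Sub_within_def by blast
  then have "card {H \<in> S. \<not> H \<subseteq> M} \<le> card (\<Union>L \<in> Sub_within G M (p ^ Suc k) T. fiber L)"
  proof (rule card_mono[rotated])
    have "(\<Union>L \<in> Sub_within G M (p ^ Suc k) T. fiber L) \<subseteq> Pow (carrier G)"
      unfolding fiber_def using subgroup.subset by blast
    then show "finite (\<Union>L \<in> Sub_within G M (p ^ Suc k) T. fiber L)"
      using finite_carrier finite_subset by blast
  qed
  also have "\<dots> \<le> (\<Sum>L \<in> Sub_within G M (p ^ Suc k) T. card (fiber L))"
    using card_UN_le[OF finite_Sub_within[OF finite_carrier]] .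
  also have "\<dots> \<le> (\<Sum>L \<in> Sub_within G M (p ^ Suc k) T. p ^ Suc k)"
    using card_subgroups_meeting_in_le[OF M Q \<open>M \<subseteq> Q\<close> \<open>card Q = p * card M\<close>]
    unfolding fiber_def Sub_within_def by (intro sum_mono) auto
  finally have outside: "card {H \<in> S. \<not> H \<subseteq> M} \<le> p ^ Suc k * card (Sub_within G M (p ^ Suc k) T)"
    by (simp add: mult.commute)
  have "S = {H \<in> S. H \<subseteq> M} \<union> {H \<in> S. \<not> H \<subseteq> M}" by blast
  then have "card S \<le> card {H \<in> S. H \<subseteq> M} + card {H \<in> S. \<not> H \<subseteq> M}"
    by (metis card_Un_le)
  then show ?thesis using inside outside unfolding S_def by linarith
qed

lemma card_Sub_within_le:
  assumes T: "subgroup T G" and "subgroup Q G" "T \<subseteq> Q" "card Q = p ^ c * card T"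
  shows "real (card (Sub_within G Q (p ^ k) T)) \<le> gauss_binom p c k"
  using assms(2-4)
proof (induction c arbitrary: Q k)
  case 0
  show ?case
  proof (cases k)
    case 0
    then show ?thesis using card_Sub_within_1_le[OF finite_carrier \<open>subgroup Q G\<close>] by simp
  next
    case (Suc k')
    have "1 < p ^ k" using Suc one_less_power[OF prime_gt_1] by blast
    then have "card Q < p ^ k * card T"
      using 0 subgroup.finite_imp_card_positive[OF T finite_carrier] by simp
    then show ?thesis using Sub_within_eq_empty[OF finite_carrier] gauss_binom_eq_0 Suc by simp
  qed
next
  case (Suc c)
  show ?case
  proof (cases k)
    case 0
    then show ?thesis using card_Sub_within_1_le[OF finite_carrier \<open>subgroup Q G\<close>] by simp
  next
    case (Suc k')
    have "T \<noteq> Q"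
      using Suc.prems(3) prime_gt_1 subgroup.finite_imp_card_positive[OF T finite_carrier] by auto
    then obtain M where M: "subgroup M G" "T \<subseteq> M" "M \<subseteq> Q" "card Q = p * card M"
      using exists_index_prime_subgroup[OF T Suc.prems(1,2)] by blast
    then have card_M: "card M = p ^ c * card T" using Suc.prems(3) prime_gt_1 by simp
    have "real (card (Sub_within G Q (p ^ Suc k') T))
        \<le> real (card (Sub_within G M (p ^ k') T))
          + real p ^ Suc k' * real (card (Sub_within G M (p ^ Suc k') T))"
      using card_Sub_within_Suc_le[OF T M(1) Suc.prems(1) M(2-4), of k']
      by (metis of_nat_add of_nat_le_iff of_nat_mult of_nat_power)
    also have "\<dots> \<le> gauss_binom p c k' + real p ^ Suc k' * gauss_binom p c (Suc k')"
      using add_mono[OF Suc.IH[OF M(1,2) card_M, of k']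
          mult_left_mono[OF Suc.IH[OF M(1,2) card_M, of "Suc k'"], of "real p ^ Suc k'"]]
      by simp
    also have "\<dots> = gauss_binom p (Suc c) (Suc k')"
      using gauss_binom_Suc_Suc[OF prime_gt_1] by simp
    finally show ?thesis using Suc by simp
  qed
qed

end

theorem proposition2p1:
  fixes P :: "('a, 'b) monoid_scheme" and T :: "'a set" and p c k :: nat
  assumes "Factorial_Ring.prime p"
    and "group P" and "finite (carrier P)"
    and "\<exists>n. order P = p ^ n"
    and "subgroup T P"
    and "card (rcosets\<^bsub>P\<^esub> T) = p ^ c"
  shows "real (card (Sub_idx P (p ^ k) T)) \<le> gauss_binom p c k"
proof -
  interpret p_group P p
    using assms(1-4) unfolding p_group_def p_group_axioms_def by blast
  have "card (carrier P) = p ^ c * card T"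
    using lagrange[OF assms(5)] assms(6) by (simp add: order_def)
  then show ?thesis
    unfolding Sub_idx_eq_Sub_within[OF finite_carrier]
    using card_Sub_within_le[OF assms(5) subgroup_self subgroup.subset[OF assms(5)]] by blast
qed

end
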